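(* Let $X$ and $Y$ be two real random variables satisfying $X \leq_{cx} Y$, with distribution functions $F_X$ and $F_Y$ respectively. For a given $\alpha \in \mathbb{R}$, let \[h = \min\left[1,\ \max\left\{w : w (x-\alpha) \leq \int_{-\infty}^x F_Y(t)\, \mathrm{d} t \ \text{ for all } x \in \mathbb{R}\right\} \right].\] Then $F_X(\alpha) \leq h$. Furthermore, there exists a random variable $\tilde X$, with distribution function $F_{\tilde X}$, such that $\tilde X \leq_{cx} Y$ and $F_{\tilde X}(\alpha) = h$.
   Context: For random variables $X$ and $Y$, $X \leq_{cx} Y$ means $\mathrm{E}\{h(X)\} \leq \mathrm{E}\{h(Y)\}$ for every convex function $h$ for which the expectations exist. *)

theory Defs
  imports "HOL-Probability.Probability"
begin

text \<open>A real random variable is represented by its law: a probability measure on the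
  Borel sets of the reals.\<close>

definition real_law :: "real measure \<Rightarrow> bool" where
  "real_law M \<longleftrightarrow> prob_space M \<and> sets M = sets borel"

definition cdf_of :: "real measure \<Rightarrow> real \<Rightarrow> real" where
  "cdf_of M x = measure M {..x}"

definition cx_le :: "real measure \<Rightarrow> real measure \<Rightarrow> bool" where
  "cx_le MX MY \<longleftrightarrow>
     integrable MX (\<lambda>x. x) \<and> integrable MY (\<lambda>x. x) \<and>
     (\<forall>h::real \<Rightarrow> real. convex_on UNIV h \<longrightarrow> integrable MX h \<longrightarrow> integrable MY h \<longrightarrow>
        (\<integral>x. h x \<partial>MX) \<le> (\<integral>x. h x \<partial>MY))"

end

theory Submission
  imports Defs
begin

text \<open>Let Psi(x) = integral of F_Y over ]-oo, x] = E (x - Y)^+. If X is below Y in convex order,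
  then F_X(alpha) (x - alpha) <= E (x - X)^+ <= Psi(x) for all x, so F_X(alpha) is the slope of a
  line through (alpha, 0) below Psi, whence F_X(alpha) <= h.
  Conversely, take an event A of probability h on which Y <= q and off which Y >= q (an atom of Y
  at the quantile q is split by an independent coin), and let X be Y off A and the conditional
  mean mu = q - Psi(q) / h of Y on A. Jensen's inequality on A gives that X is below Y in convex
  order, and mu <= alpha because h is such a slope, so F_X(alpha) >= h. For h = 1 the event is
  the whole space and X is the mean of Y.\<close>


lemma convex_on_max:
  fixes f g :: "'a::real_vector \<Rightarrow> real"
  assumes f: "convex_on S f" and g: "convex_on S g"
  shows "convex_on S (\<lambda>x. max (f x) (g x))"
proof
  show "convex S" using f by (simp add: convex_on_def)
  fix t :: real and x y assume t: "0 < t" "t < 1" and xy: "x \<in> S" "y \<in> S"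
  have "(1 - t) * f x + t * f y \<le> (1 - t) * max (f x) (g x) + t * max (f y) (g y)"
    and "(1 - t) * g x + t * g y \<le> (1 - t) * max (f x) (g x) + t * max (f y) (g y)"
    using t by (intro add_mono mult_left_mono; simp)+
  with convex_onD[OF f, of t x y] convex_onD[OF g, of t x y] t xy
  show "max (f ((1 - t) *\<^sub>R x + t *\<^sub>R y)) (g ((1 - t) *\<^sub>R x + t *\<^sub>R y))
        \<le> (1 - t) * max (f x) (g x) + t * max (f y) (g y)"
    by simp
qed

lemma convex_on_pos_part_diff: "convex_on UNIV (\<lambda>y::real. max 0 (x - y))"
  by (intro convex_on_max convex_on_diff) (simp_all add: convex_on_const concave_on_ident)

lemma Greatest_mem_eq_Sup:
  fixes S :: "real set"
  assumes "closed S" and "S \<noteq> {}" and "bdd_above S"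
  shows "(GREATEST w. w \<in> S) = Sup S"
  by (rule Greatest_equality) (use assms closed_contains_Sup cSup_upper in auto)

definition slopes_below :: "(real \<Rightarrow> real) \<Rightarrow> real \<Rightarrow> real set" where
  "slopes_below \<Psi> \<alpha> = {w. \<forall>x. w * (x - \<alpha>) \<le> \<Psi> x}"

lemma closed_slopes_below: "closed (slopes_below \<Psi> \<alpha>)"
  unfolding slopes_below_def
  by (intro closed_Collect_all closed_Collect_le) (auto intro!: continuous_intros)

lemma slopes_below_le: "w \<in> slopes_below \<Psi> \<alpha> \<Longrightarrow> w \<le> \<Psi> (\<alpha> + 1)"
  by (auto simp: slopes_below_def dest: spec[of _ "\<alpha> + 1"])

lemma slopes_below_downward_closed:
  assumes "\<And>x. 0 \<le> \<Psi> x" and "w \<in> slopes_below \<Psi> \<alpha>" and "0 \<le> v" and "v \<le> w"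
  shows "v \<in> slopes_below \<Psi> \<alpha>"
  unfolding slopes_below_def mem_Collect_eq
proof
  fix x
  show "v * (x - \<alpha>) \<le> \<Psi> x"
  proof (cases "x \<le> \<alpha>")
    case True
    then show ?thesis using assms(1)[of x] \<open>0 \<le> v\<close> by (smt (verit) mult_nonneg_nonpos)
  next
    case False
    then have "v * (x - \<alpha>) \<le> w * (x - \<alpha>)" using \<open>v \<le> w\<close> by (intro mult_right_mono) auto
    then show ?thesis using assms(2) by (auto simp: slopes_below_def dest: spec[of _ x])
  qed
qed

lemma Greatest_slopes_below:
  assumes "\<And>x. 0 \<le> \<Psi> x"
  shows "(GREATEST w. w \<in> slopes_below \<Psi> \<alpha>) \<in> slopes_below \<Psi> \<alpha>"
    and "\<And>w. w \<in> slopes_below \<Psi> \<alpha> \<Longrightarrow> w \<le> (GREATEST w. w \<in> slopes_below \<Psi> \<alpha>)"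
    and "0 \<le> (GREATEST w. w \<in> slopes_below \<Psi> \<alpha>)"
proof -
  have 0: "0 \<in> slopes_below \<Psi> \<alpha>" using assms by (simp add: slopes_below_def)
  have bdd: "bdd_above (slopes_below \<Psi> \<alpha>)"
    using slopes_below_le by (auto simp: bdd_above_def)
  have eq: "(GREATEST w. w \<in> slopes_below \<Psi> \<alpha>) = Sup (slopes_below \<Psi> \<alpha>)"
    using closed_slopes_below 0 bdd by (intro Greatest_mem_eq_Sup) auto
  show "(GREATEST w. w \<in> slopes_below \<Psi> \<alpha>) \<in> slopes_below \<Psi> \<alpha>"
    unfolding eq using closed_slopes_below 0 bdd by (intro closed_contains_Sup) auto
  show le: "\<And>w. w \<in> slopes_below \<Psi> \<alpha> \<Longrightarrow> w \<le> (GREATEST w. w \<in> slopes_below \<Psi> \<alpha>)"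
    unfolding eq using bdd by (simp add: cSup_upper)
  show "0 \<le> (GREATEST w. w \<in> slopes_below \<Psi> \<alpha>)" using le[OF 0] .
qed

lemma set_integral_cdf_eq_integral_pos_part:
  assumes "real_law M"
  shows "(LINT t:{..x}|lborel. cdf_of M t) = (\<integral>y. max 0 (x - y) \<partial>M)"
proof -
  interpret prob_space M using assms by (simp add: real_law_def)
  have sM: "sets M = sets borel" using assms by (simp add: real_law_def)
  interpret P: pair_sigma_finite M lborel
    by (intro pair_sigma_finite.intro) unfold_locales
  let ?g = "\<lambda>y t. indicator {z::real\<times>real. fst z \<le> snd z \<and> snd z \<le> x} (y, t) :: ennreal"
  have meas: "case_prod ?g \<in> borel_measurable (M \<Otimes>\<^sub>M lborel)"
    by (subst measurable_cong_sets[OF sets_pair_measure_cong[OF sM sets_lborel] refl])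
       (simp add: split_beta')
  have "mono (cdf_of M)"
    unfolding cdf_of_def mono_def by (auto intro!: finite_measure_mono simp: sM)
  then have cdf_meas: "cdf_of M \<in> borel_measurable borel"
    by (rule borel_measurable_mono)
  have "(LINT t:{..x}|lborel. cdf_of M t)
      = enn2real (\<integral>\<^sup>+ t. ennreal (indicator {..x} t *\<^sub>R cdf_of M t) \<partial>lborel)"
    unfolding set_lebesgue_integral_def
    by (rule integral_eq_nn_integral) (use cdf_meas in simp, auto simp: cdf_of_def)
  also have "(\<integral>\<^sup>+ t. ennreal (indicator {..x} t *\<^sub>R cdf_of M t) \<partial>lborel)
      = (\<integral>\<^sup>+ t. (\<integral>\<^sup>+ y. ?g y t \<partial>M) \<partial>lborel)"
  proof (rule nn_integral_cong)
    fix t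
    have "(\<integral>\<^sup>+ y. ?g y t \<partial>M) = (\<integral>\<^sup>+ y. indicator {..x} t * indicator {..t} y \<partial>M)"
      by (intro nn_integral_cong) (auto simp: indicator_def)
    also have "\<dots> = indicator {..x} t * emeasure M {..t}"
      by (subst nn_integral_cmult) (auto simp: sM intro!: borel_measurable_indicator)
    finally show "ennreal (indicator {..x} t *\<^sub>R cdf_of M t) = (\<integral>\<^sup>+ y. ?g y t \<partial>M)"
      by (auto simp: cdf_of_def emeasure_eq_measure indicator_def)
  qed
  also have "\<dots> = (\<integral>\<^sup>+ y. (\<integral>\<^sup>+ t. ?g y t \<partial>lborel) \<partial>M)"
    by (rule P.Fubini'[OF meas])
  also have "\<dots> = (\<integral>\<^sup>+ y. ennreal (max 0 (x - y)) \<partial>M)"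
  proof (rule nn_integral_cong)
    fix y
    have "(\<integral>\<^sup>+ t. ?g y t \<partial>lborel) = (\<integral>\<^sup>+ t. indicator {y..x} t \<partial>lborel)"
      by (intro nn_integral_cong) (auto simp: indicator_def)
    then show "(\<integral>\<^sup>+ t. ?g y t \<partial>lborel) = ennreal (max 0 (x - y))"
      by (cases "y \<le> x") auto
  qed
  also have "enn2real \<dots> = (\<integral>y. max 0 (x - y) \<partial>M)"
    by (rule integral_eq_nn_integral[symmetric]) (auto simp: measurable_cong_sets[OF sM refl])
  finally show ?thesis .
qed

lemma integrable_pos_part_diff:
  assumes "real_law M" and "integrable M (\<lambda>y. y)"
  shows "integrable M (\<lambda>y. max 0 (x - y))"
proof -
  interpret prob_space M using assms(1) by (simp add: real_law_def)
  show ?thesis using assms(2) by (intro integrable_max) auto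
qed

lemma cdf_mult_le_integral_pos_part:
  assumes "real_law M" and "integrable M (\<lambda>y. y)"
  shows "cdf_of M \<alpha> * (x - \<alpha>) \<le> (\<integral>y. max 0 (x - y) \<partial>M)"
proof -
  interpret prob_space M using assms(1) by (simp add: real_law_def)
  have sM: "sets M = sets borel" using assms(1) by (simp add: real_law_def)
  show ?thesis
  proof (cases "x \<le> \<alpha>")
    case True
    have "cdf_of M \<alpha> * (x - \<alpha>) \<le> 0"
      using True by (intro mult_nonneg_nonpos) (auto simp: cdf_of_def)
    also have "0 \<le> (\<integral>y. max 0 (x - y) \<partial>M)" by (intro integral_nonneg_AE) auto
    finally show ?thesis .
  next
    case False
    have "cdf_of M \<alpha> * (x - \<alpha>) = (\<integral>y. indicator {..\<alpha>} y * (x - \<alpha>) \<partial>M)"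
      by (simp add: cdf_of_def sM)
    also have "\<dots> \<le> (\<integral>y. max 0 (x - y) \<partial>M)"
      using False
      by (intro integral_mono integrable_pos_part_diff assms integrable_mult_left integrable_real_indicator)
         (auto simp: sM emeasure_eq_measure indicator_def)
    finally show ?thesis .
  qed
qed

lemma cx_le_integral_pos_part_mono:
  assumes "real_law M" and "real_law N" and "cx_le M N"
  shows "(\<integral>y. max 0 (x - y) \<partial>M) \<le> (\<integral>y. max 0 (x - y) \<partial>N)"
  using assms convex_on_pos_part_diff[of x] integrable_pos_part_diff
  unfolding cx_le_def by blast

lemma real_law_distr:
  assumes "prob_space P" and "Y \<in> borel_measurable P"
  shows "real_law (distr P borel Y)"
  using assms by (simp add: real_law_def prob_space.prob_space_distr)

lemma measurable_collapse:
  assumes "Y \<in> borel_measurable P" and "A \<in> sets P"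
  shows "(\<lambda>z. if z \<in> A then \<mu> else Y z) \<in> borel_measurable P"
  using assms by (intro measurable_If_set) auto

text \<open>The balance hypothesis says that mu is the conditional mean of Y on A; integrating a
  supporting line of the convex function at mu over A gives the convex-order inequality.\<close>

lemma cx_le_distr_collapse:
  fixes Y :: "'a \<Rightarrow> real"
  assumes P: "prob_space P" and Y: "integrable P Y" and A: "A \<in> sets P"
    and balance: "(\<integral>z. indicator A z * (Y z - \<mu>) \<partial>P) = 0"
  shows "cx_le (distr P borel (\<lambda>z. if z \<in> A then \<mu> else Y z)) (distr P borel Y)"
proof -
  interpret prob_space P by (fact P)
  define T where "T z = (if z \<in> A then \<mu> else Y z)" for z
  have Ym: "Y \<in> borel_measurable P" using Y by (rule borel_measurable_integrable)
  have Tm: "T \<in> borel_measurable P"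
    unfolding T_def[abs_def] using Ym A by (rule measurable_collapse)
  have bound: "integrable P (\<lambda>z. \<bar>\<mu>\<bar> + \<bar>Y z\<bar>)" using Y by auto
  have iT: "integrable P T"
    by (rule Bochner_Integration.integrable_bound[OF bound Tm]) (auto simp: T_def)
  have iA: "integrable P (\<lambda>z. indicator A z * (Y z - \<mu>))"
    by (rule Bochner_Integration.integrable_bound[OF bound])
       (use Ym A in \<open>auto simp: indicator_def\<close>)
  show ?thesis
    unfolding cx_le_def T_def[symmetric]
  proof (intro conjI allI impI)
    show "integrable (distr P borel T) (\<lambda>x. x)" using iT Tm by (simp add: integrable_distr_eq)
    show "integrable (distr P borel Y) (\<lambda>x. x)" using Y Ym by (simp add: integrable_distr_eq)
    fix \<phi> :: "real \<Rightarrow> real"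
    assume c: "convex_on UNIV \<phi>" and i1: "integrable (distr P borel T) \<phi>"
      and i2: "integrable (distr P borel Y) \<phi>"
    have \<phi>m: "\<phi> \<in> borel_measurable borel"
      using borel_measurable_integrable[OF i2] by simp
    have i1': "integrable P (\<lambda>z. \<phi> (T z))" and i2': "integrable P (\<lambda>z. \<phi> (Y z))"
      using i1 i2 Tm Ym \<phi>m by (simp_all add: integrable_distr_eq)
    define sl where "sl = Inf ((\<lambda>t. (\<phi> \<mu> - \<phi> t) / (\<mu> - t)) ` ({\<mu><..} \<inter> UNIV))"
    have support: "\<phi> \<mu> + sl * (y - \<mu>) \<le> \<phi> y" for y
      using convex_le_Inf_differential[OF c, of \<mu> y] by (simp add: sl_def)
    have "0 \<le> \<phi> (Y z) - \<phi> (T z) - sl * (indicator A z * (Y z - \<mu>))" for z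
      using support[of "Y z"] by (auto simp: T_def)
    then have "0 \<le> (\<integral>z. \<phi> (Y z) - \<phi> (T z) - sl * (indicator A z * (Y z - \<mu>)) \<partial>P)"
      by (intro integral_nonneg_AE AE_I2)
    also have "\<dots> = (\<integral>z. \<phi> (Y z) \<partial>P) - (\<integral>z. \<phi> (T z) \<partial>P)"
      using i1' i2' iA balance by simp
    finally show "(\<integral>x. \<phi> x \<partial>distr P borel T) \<le> (\<integral>x. \<phi> x \<partial>distr P borel Y)"
      using Tm Ym \<phi>m by (simp add: integral_distr)
  qed
qed

lemma cdf_of_distr_collapse_ge:
  assumes "prob_space P" and "Y \<in> borel_measurable P" and "A \<in> sets P" and "\<mu> \<le> \<alpha>"
  shows "measure P A \<le> cdf_of (distr P borel (\<lambda>z. if z \<in> A then \<mu> else Y z)) \<alpha>"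
proof -
  interpret prob_space P by (fact assms(1))
  have Tm: "(\<lambda>z. if z \<in> A then \<mu> else Y z) \<in> borel_measurable P"
    using assms(2,3) by (rule measurable_collapse)
  have "measure P A \<le> measure P ((\<lambda>z. if z \<in> A then \<mu> else Y z) -` {..\<alpha>} \<inter> space P)"
    using assms(3,4) sets.sets_into_space[OF assms(3)] measurable_sets[OF Tm, of "{..\<alpha>}"]
    by (intro finite_measure_mono) auto
  then show ?thesis by (simp add: cdf_of_def measure_distr[OF Tm])
qed

lemma integral_le_of_pos_part_ge:
  assumes "real_law M" and iM: "integrable M (\<lambda>y. y)"
    and ge: "\<And>x. x - \<alpha> \<le> (\<integral>y. max 0 (x - y) \<partial>M)"
  shows "(\<integral>y. y \<partial>M) \<le> \<alpha>"
proof -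
  interpret prob_space M using assms(1) by (simp add: real_law_def)
  have sM: "sets M = sets borel" using assms(1) by (simp add: real_law_def)
  have lim: "(\<lambda>n. \<integral>y. max 0 (y - real n) \<partial>M) \<longlonglongrightarrow> (\<integral>y. 0 \<partial>M)"
  proof (rule integral_dominated_convergence[where w="\<lambda>y. \<bar>y\<bar>"])
    show "AE y in M. (\<lambda>n. max 0 (y - real n)) \<longlonglongrightarrow> 0"
    proof (rule AE_I2)
      fix y :: real
      obtain N :: nat where "y < real N" using reals_Archimedean2 by blast
      then have "\<forall>n\<ge>N. max 0 (y - real n) = 0" by auto
      then show "(\<lambda>n. max 0 (y - real n)) \<longlonglongrightarrow> 0"
        by (intro tendsto_eventually) (auto simp: eventually_sequentially)
    qed
  qed (auto intro!: iM simp: measurable_cong_sets[OF sM refl])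
  have "(\<integral>y. y \<partial>M) - \<alpha> \<le> (\<integral>y. max 0 (y - real n) \<partial>M)" for n
  proof -
    have "(\<integral>y. max 0 (real n - y) \<partial>M) = (\<integral>y. (real n - y) + max 0 (y - real n) \<partial>M)"
      by (rule Bochner_Integration.integral_cong) auto
    also have "\<dots> = (\<integral>y. real n - y \<partial>M) + (\<integral>y. max 0 (y - real n) \<partial>M)"
      by (rule Bochner_Integration.integral_add) (use iM in auto)
    also have "(\<integral>y. real n - y \<partial>M) = real n - (\<integral>y. y \<partial>M)"
      by (subst Bochner_Integration.integral_diff) (use iM in \<open>auto simp: prob_space\<close>)
    finally show ?thesis using ge[of "real n"] by simp
  qed
  then have "(\<integral>y. y \<partial>M) - \<alpha> \<le> (\<integral>y. 0 \<partial>M)"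
    by (intro LIMSEQ_le_const[OF lim]) auto
  then show ?thesis by simp
qed

lemma exists_quantile:
  assumes "real_law M" and "0 < h" and "h < 1"
  obtains q where "measure M {..<q} \<le> h" and "h \<le> measure M {..q}"
proof -
  interpret real_distribution M
    using assms(1) by (simp add: real_law_def real_distribution_def real_distribution_axioms_def)
  define F where "F = cdf M"
  define Q where "Q = {t. h \<le> F t}"
  have "\<forall>\<^sub>F t in at_top. h < F t"
    using order_tendstoD(1)[OF cdf_lim_at_top_prob assms(3)] by (simp add: F_def)
  then obtain t\<^sub>0 where "h < F t\<^sub>0" by (auto simp: eventually_at_top_linorder)
  then have Q_ne: "Q \<noteq> {}" by (auto simp: Q_def intro!: exI[of _ t\<^sub>0])
  have "\<forall>\<^sub>F t in at_bot. F t < h"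
    using order_tendstoD(2)[OF cdf_lim_at_bot assms(2)] by (simp add: F_def)
  then obtain b where b: "\<And>t. t \<le> b \<Longrightarrow> F t < h" by (auto simp: eventually_at_bot_linorder)
  have "b \<le> t" if "t \<in> Q" for t using b[of t] that by (force simp: Q_def)
  then have bdd: "bdd_below Q" by (rule bdd_belowI)
  define q where "q = Inf Q"
  have "measure M {..<q} \<le> h"
  proof (rule tendsto_upperbound)
    show "(F \<longlongrightarrow> measure M {..<q}) (at_left q)"
      using cdf_at_left[of q] by (simp add: F_def)
    show "\<forall>\<^sub>F t in at_left q. F t \<le> h"
      using eventually_at_left_real[of "q - 1" q]
    proof (rule eventually_mono)
      fix t assume "t \<in> {q - 1<..<q}"
      then have "t \<notin> Q" using cInf_lower[OF _ bdd, of t] by (auto simp: q_def)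
      then show "F t \<le> h" by (auto simp: Q_def)
    qed simp
  qed simp
  moreover have "h \<le> measure M {..q}"
  proof (rule tendsto_lowerbound)
    show "(F \<longlongrightarrow> measure M {..q}) (at_right q)"
      using cdf_is_right_cont[of q] by (simp add: F_def cdf_def continuous_within)
    show "\<forall>\<^sub>F t in at_right q. h \<le> F t"
      using eventually_at_right_less[of q]
    proof (rule eventually_mono)
      fix t assume "q < t"
      then obtain s where "s \<in> Q" "s < t" using cInf_lessD[OF Q_ne] by (auto simp: q_def)
      then show "h \<le> F t" using cdf_nondecreasing[of s t] by (auto simp: Q_def F_def)
    qed
  qed simp
  ultimately show ?thesis by (rule that)
qed

abbreviation lower_event :: "real \<Rightarrow> (real \<times> bool) set" where
  "lower_event q \<equiv> {..<q} \<times> UNIV \<union> {q} \<times> {True}"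

lemma measure_pair_bernoulli_lower_event:
  assumes "real_law M" and "0 \<le> \<theta>" and "\<theta> \<le> 1"
  defines "P \<equiv> M \<Otimes>\<^sub>M measure_pmf (bernoulli_pmf \<theta>)"
  shows "lower_event q \<in> sets P"
    and "measure P (lower_event q) = measure M {..<q} + measure M {q} * \<theta>"
proof -
  interpret prob_space M using assms(1) by (simp add: real_law_def)
  have sM: "sets M = sets borel" using assms(1) by (simp add: real_law_def)
  have C: "sigma_finite_measure (measure_pmf (bernoulli_pmf \<theta>))"
    by (rule prob_space_imp_sigma_finite[OF prob_space_measure_pmf])
  have lower: "{..<q} \<times> UNIV \<in> sets P" and atom: "{q} \<times> {True} \<in> sets P"
    unfolding P_def by (rule pair_measureI; simp add: sM)+
  then show "lower_event q \<in> sets P" by (rule sets.Un)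
  have "emeasure P (lower_event q) = emeasure P ({..<q} \<times> UNIV) + emeasure P ({q} \<times> {True})"
    by (rule plus_emeasure[OF lower atom, symmetric]) auto
  also have "emeasure P ({..<q} \<times> UNIV) = emeasure M {..<q} * emeasure (bernoulli_pmf \<theta>) UNIV"
    unfolding P_def by (rule sigma_finite_measure.emeasure_pair_measure_Times[OF C]) (auto simp: sM)
  also have "emeasure P ({q} \<times> {True}) = emeasure M {q} * emeasure (bernoulli_pmf \<theta>) {True}"
    unfolding P_def by (rule sigma_finite_measure.emeasure_pair_measure_Times[OF C]) (auto simp: sM)
  also have "emeasure (bernoulli_pmf \<theta>) UNIV = 1"
    using prob_space.emeasure_space_1[OF prob_space_measure_pmf] by simp
  also have "emeasure (bernoulli_pmf \<theta>) {True} = ennreal \<theta>"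
    using assms(2,3) by (simp add: emeasure_pmf_single)
  finally have "emeasure P (lower_event q) = ennreal (measure M {..<q} + measure M {q} * \<theta>)"
    using assms(2) by (simp add: emeasure_eq_measure ennreal_mult' ennreal_plus[symmetric])
  moreover have "0 \<le> measure M {..<q} + measure M {q} * \<theta>" using assms(2) by simp
  ultimately show "measure P (lower_event q) = measure M {..<q} + measure M {q} * \<theta>"
    by (metis enn2real_ennreal measure_def)
qed


lemma cx_le_refl:
  assumes "integrable M (\<lambda>y. y)"
  shows "cx_le M M"
  using assms by (simp add: cx_le_def)

lemma exists_cx_le_cdf_ge_1:
  assumes rl: "real_law MY" and iY: "integrable MY (\<lambda>y. y)"
    and slope: "1 \<in> slopes_below (\<lambda>x. \<integral>y. max 0 (x - y) \<partial>MY) \<alpha>"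
  shows "\<exists>MX'. real_law MX' \<and> cx_le MX' MY \<and> 1 \<le> cdf_of MX' \<alpha>"
proof -
  interpret prob_space MY using rl by (simp add: real_law_def)
  have sY: "sets MY = sets borel" using rl by (simp add: real_law_def)
  have idm: "(\<lambda>y. y) \<in> borel_measurable MY" using iY by (rule borel_measurable_integrable)
  define e where "e = (\<integral>y. y \<partial>MY)"
  have "e \<le> \<alpha>"
    unfolding e_def using slope by (intro integral_le_of_pos_part_ge[OF rl iY]) (simp add: slopes_below_def)
  have "(\<integral>z. indicator (space MY) z * (z - e) \<partial>MY) = (\<integral>z. z - e \<partial>MY)"
    by (rule Bochner_Integration.integral_cong) auto
  also have "\<dots> = 0" using iY by (simp add: e_def prob_space)
  finally have balance: "(\<integral>z. indicator (space MY) z * (z - e) \<partial>MY) = 0" .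
  have "distr MY borel (\<lambda>y. y) = MY" using sY by (intro distr_id2) simp
  then show ?thesis
    using real_law_distr[OF prob_space_axioms measurable_collapse[OF idm sets.top]]
      cx_le_distr_collapse[OF prob_space_axioms iY sets.top balance]
      cdf_of_distr_collapse_ge[OF prob_space_axioms idm sets.top \<open>e \<le> \<alpha>\<close>]
    by (auto simp: prob_space)
qed


lemma exists_cx_le_cdf_ge_less_1:
  assumes rl: "real_law MY" and iY: "integrable MY (\<lambda>y. y)" and h: "0 < h" "h < 1"
    and slope: "h \<in> slopes_below (\<lambda>x. \<integral>y. max 0 (x - y) \<partial>MY) \<alpha>"
  shows "\<exists>MX'. real_law MX' \<and> cx_le MX' MY \<and> h \<le> cdf_of MX' \<alpha>"
proof -
  interpret prob_space MY using rl by (simp add: real_law_def)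
  have sY: "sets MY = sets borel" using rl by (simp add: real_law_def)
  obtain q where q: "measure MY {..<q} \<le> h" "h \<le> measure MY {..q}"
    using exists_quantile[OF rl h] .
  have "measure MY {..q} = measure MY {..<q} + measure MY {q}"
    using finite_measure_Union[of "{..<q}" "{q}"] by (simp add: sY ivl_disj_un_singleton(2)[symmetric])
  then obtain \<theta> where \<theta>: "0 \<le> \<theta>" "\<theta> \<le> 1" "measure MY {..<q} + measure MY {q} * \<theta> = h"
    using q by (intro that[of "if measure MY {q} = 0 then 0 else (h - measure MY {..<q}) / measure MY {q}"])
       (auto simp: field_simps)
  define P where "P = MY \<Otimes>\<^sub>M measure_pmf (bernoulli_pmf \<theta>)"
  define A where "A = lower_event q"
  interpret P: prob_space P
    unfolding P_def by (rule prob_space_pair[OF prob_space_axioms prob_space_measure_pmf])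
  note A = measure_pair_bernoulli_lower_event[OF rl \<theta>(1,2), of q, folded P_def A_def]
  have "distr P borel fst = distr P MY fst" by (rule distr_cong) (simp_all add: sY)
  also have "\<dots> = MY"
    unfolding P_def by (rule prob_space.distr_pair_fst[OF prob_space_measure_pmf])
  finally have distr_fst: "distr P borel fst = MY" .
  have fstm: "fst \<in> borel_measurable P"
    using measurable_fst by (simp add: P_def measurable_cong_sets[OF refl sY, symmetric])
  have fst_integral: "integrable P (\<lambda>z. g (fst z)) \<and> (\<integral>z. g (fst z) \<partial>P) = (\<integral>y. g y \<partial>MY)"
    if "integrable MY g" for g :: "real \<Rightarrow> real"
  proof -
    have gm: "g \<in> borel_measurable borel"
      using borel_measurable_integrable[OF that] by (simp add: measurable_cong_sets[OF sY refl])
    show ?thesis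
      using that fstm gm by (simp add: distr_fst[symmetric] integrable_distr_eq integral_distr)
  qed
  define \<Psi>q where "\<Psi>q = (\<integral>y. max 0 (q - y) \<partial>MY)"
  define \<mu> where "\<mu> = q - \<Psi>q / h"
  have "indicator A z * (fst z - \<mu>) = \<Psi>q / h * indicator A z - max 0 (q - fst z)" for z
    by (cases z) (auto simp: A_def \<mu>_def indicator_def)
  moreover have "integrable P (indicator A :: _ \<Rightarrow> real)"
    using A(1) by (intro integrable_real_indicator) (auto simp: P.emeasure_eq_measure)
  ultimately have "(\<integral>z. indicator A z * (fst z - \<mu>) \<partial>P)
      = \<Psi>q / h * measure P A - (\<integral>z. max 0 (q - fst z) \<partial>P)"
    using fst_integral[OF integrable_pos_part_diff[OF rl iY]] by (simp add: sets.Int_space_eq2[OF A(1)])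
  also have "\<dots> = 0"
    using A(2) \<theta>(3) h fst_integral[OF integrable_pos_part_diff[OF rl iY]] by (simp add: \<Psi>q_def)
  finally have balance: "(\<integral>z. indicator A z * (fst z - \<mu>) \<partial>P) = 0" .
  have "h * (q - \<alpha>) \<le> \<Psi>q" using slope by (simp add: slopes_below_def \<Psi>q_def)
  then have "\<mu> \<le> \<alpha>" using h by (simp add: \<mu>_def field_simps)
  show ?thesis
    using real_law_distr[OF P.prob_space_axioms measurable_collapse[OF fstm A(1)]]
      cx_le_distr_collapse[OF P.prob_space_axioms _ A(1) balance]
      cdf_of_distr_collapse_ge[OF P.prob_space_axioms fstm A(1) \<open>\<mu> \<le> \<alpha>\<close>]
      fst_integral[OF iY] A(2) \<theta>(3)
    by (auto simp: distr_fst)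
qed


lemma exists_cx_le_cdf_ge:
  assumes "real_law MY" and "integrable MY (\<lambda>y. y)" and "0 \<le> h" and "h \<le> 1"
    and "h \<in> slopes_below (\<lambda>x. \<integral>y. max 0 (x - y) \<partial>MY) \<alpha>"
  shows "\<exists>MX'. real_law MX' \<and> cx_le MX' MY \<and> h \<le> cdf_of MX' \<alpha>"
proof -
  consider "h = 0" | "0 < h" "h < 1" | "h = 1" using assms(3,4) by linarith
  then show ?thesis
  proof cases
    case 1
    then show ?thesis using assms(1,2) cx_le_refl by (auto simp: cdf_of_def)
  next
    case 2
    then show ?thesis using exists_cx_le_cdf_ge_less_1 assms(1,2,5) by blast
  next
    case 3
    then show ?thesis using exists_cx_le_cdf_ge_1 assms(1,2,5) by blast
  qed
qed

theorem lemma2: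
  fixes MX MY :: "real measure" and \<alpha> :: real
  assumes "real_law MX" and "real_law MY" and "cx_le MX MY"
  defines "h \<equiv> min 1 (GREATEST w::real. \<forall>x::real.
              w * (x - \<alpha>) \<le> (LINT t:{..x}|lborel. cdf_of MY t))"
  shows "cdf_of MX \<alpha> \<le> h \<and>
         (\<exists>MX'::real measure. real_law MX' \<and> cx_le MX' MY \<and> cdf_of MX' \<alpha> = h)"
proof -
  define \<Psi> where "\<Psi> x = (\<integral>y. max 0 (x - y) \<partial>MY)" for x
  have iY: "integrable MY (\<lambda>y. y)" using assms(3) by (simp add: cx_le_def)
  have \<Psi>_nonneg: "0 \<le> \<Psi> x" for x
    unfolding \<Psi>_def by (intro integral_nonneg_AE AE_I2) simp
  define m where "m = (GREATEST w. w \<in> slopes_below \<Psi> \<alpha>)"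
  note m = Greatest_slopes_below[where \<Psi> = \<Psi> and \<alpha> = \<alpha>, OF \<Psi>_nonneg, folded m_def]
  have h: "h = min 1 m"
    by (simp add: h_def m_def \<Psi>_def slopes_below_def set_integral_cdf_eq_integral_pos_part[OF assms(2)])
  have upper: "cdf_of M \<alpha> \<le> h" if "real_law M" and "cx_le M MY" for M
  proof -
    have iM: "integrable M (\<lambda>y. y)" using that(2) by (simp add: cx_le_def)
    have "cdf_of M \<alpha> * (x - \<alpha>) \<le> \<Psi> x" for x
      unfolding \<Psi>_def using cdf_mult_le_integral_pos_part[OF that(1) iM]
      by (rule order_trans) (rule cx_le_integral_pos_part_mono[OF that(1) assms(2) that(2)])
    then have "cdf_of M \<alpha> \<in> slopes_below \<Psi> \<alpha>" by (simp add: slopes_below_def)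
    then show ?thesis
      using m(2) that(1) by (simp add: h real_law_def cdf_of_def prob_space.prob_le_1)
  qed
  have "h \<in> slopes_below \<Psi> \<alpha>"
    using slopes_below_downward_closed[OF \<Psi>_nonneg m(1)] m(3) by (simp add: h)
  moreover have "0 \<le> h" and "h \<le> 1" using m(3) by (simp_all add: h)
  ultimately obtain MX' where "real_law MX'" "cx_le MX' MY" "h \<le> cdf_of MX' \<alpha>"
    using exists_cx_le_cdf_ge[OF assms(2) iY] unfolding \<Psi>_def[abs_def] by blast
  then show ?thesis using upper[of MX'] upper[OF assms(1,3)] by auto
qed

end
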